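(* Let $W$ be an affine Weyl group, $w\in W$, $i\in D_R(w)$, and let $r_1,\dots,r_n$ be reflections with $H_{r_t}=H_{\alpha,c+t}$ for some root $\alpha$ and $c\in\mathbb{Z}$, such that for all $1\le t\le n$, $$\ell(r_t\cdots r_1ws_i)=\ell(r_{t-1}\cdots r_1ws_i)+1\quad\text{and}\quad r_t\cdots r_1ws_i\neq r_{t-1}\cdots r_1w.$$ Then $i\notin D_R(r_n\cdots r_1ws_i)$.
   Context: $W$ is the affine Weyl group of a crystallographic root system $\Phi$, a Coxeter group with simple generators $s_i$; $H_{\beta,k}=\{v:\langle v,\beta\rangle=k\}$ and reflections of $W$ are the reflections in these hyperplanes; $H_r$ denotes the hyperplane of the reflection $r$. $\ell$ is length and $D_R(w)=\{i:\ell(ws_i)<\ell(w)\}$ is the right descent set. *)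

theory Defs
  imports "HOL-Analysis.Analysis"
begin

definition root_system :: "'a::euclidean_space set \<Rightarrow> bool" where
  "root_system \<Phi> \<longleftrightarrow> finite \<Phi> \<and> 0 \<notin> \<Phi> \<and> span \<Phi> = UNIV
     \<and> (\<forall>\<alpha>\<in>\<Phi>. \<forall>\<beta>\<in>\<Phi>. \<beta> - (2 * (\<beta> \<bullet> \<alpha>) / (\<alpha> \<bullet> \<alpha>)) *\<^sub>R \<alpha> \<in> \<Phi>)
     \<and> (\<forall>\<alpha>\<in>\<Phi>. \<forall>\<beta>\<in>\<Phi>. 2 * (\<beta> \<bullet> \<alpha>) / (\<alpha> \<bullet> \<alpha>) \<in> \<int>)
     \<and> (\<forall>\<alpha>\<in>\<Phi>. \<forall>c::real. c *\<^sub>R \<alpha> \<in> \<Phi> \<longrightarrow> c = 1 \<or> c = -1)"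

definition hyp :: "'a::euclidean_space \<Rightarrow> real \<Rightarrow> 'a set" where
  "hyp \<beta> k = {v. v \<bullet> \<beta> = k}"

definition aff_refl :: "'a::euclidean_space \<Rightarrow> real \<Rightarrow> 'a \<Rightarrow> 'a" where
  "aff_refl \<beta> k x = x - ((x \<bullet> \<beta> - k) * (2 / (\<beta> \<bullet> \<beta>))) *\<^sub>R \<beta>"

inductive_set affW :: "'a::euclidean_space set \<Rightarrow> ('a \<Rightarrow> 'a) set" for \<Phi> where
  affW_id: "id \<in> affW \<Phi>"
| affW_step: "\<beta> \<in> \<Phi> \<Longrightarrow> x \<in> affW \<Phi> \<Longrightarrow> aff_refl \<beta> (of_int k) \<circ> x \<in> affW \<Phi>"

text \<open>A point not lying on any hyperplane H_{beta,k}; its alcove serves as fundamental alcove.\<close>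
definition generic :: "'a::euclidean_space set \<Rightarrow> 'a \<Rightarrow> bool" where
  "generic \<Phi> p \<longleftrightarrow> (\<forall>\<beta>\<in>\<Phi>. \<forall>k::int. p \<notin> hyp \<beta> (of_int k))"

definition is_wall :: "'a::euclidean_space set \<Rightarrow> 'a \<Rightarrow> 'a \<Rightarrow> int \<Rightarrow> bool" where
  "is_wall \<Phi> p \<beta> k \<longleftrightarrow> (\<exists>x. x \<in> hyp \<beta> (of_int k) \<and>
     (\<forall>\<gamma>\<in>\<Phi>. \<forall>m::int. hyp \<gamma> (of_int m) \<noteq> hyp \<beta> (of_int k) \<longrightarrow>
        (x \<bullet> \<gamma> - of_int m) * (p \<bullet> \<gamma> - of_int m) > 0))"

definition simple_refls :: "'a::euclidean_space set \<Rightarrow> 'a \<Rightarrow> ('a \<Rightarrow> 'a) set" where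
  "simple_refls \<Phi> p = {aff_refl \<beta> (of_int k) | \<beta> k. \<beta> \<in> \<Phi> \<and> is_wall \<Phi> p \<beta> k}"

definition len :: "'a::euclidean_space set \<Rightarrow> 'a \<Rightarrow> ('a \<Rightarrow> 'a) \<Rightarrow> nat" where
  "len \<Phi> p w = (LEAST n. \<exists>ws. length ws = n \<and> set ws \<subseteq> simple_refls \<Phi> p \<and> w = foldr (\<circ>) ws id)"

text \<open>Right descent set (indexed by the simple generators themselves).\<close>
definition rdesc :: "'a::euclidean_space set \<Rightarrow> 'a \<Rightarrow> ('a \<Rightarrow> 'a) \<Rightarrow> ('a \<Rightarrow> 'a) set" where
  "rdesc \<Phi> p w = {s \<in> simple_refls \<Phi> p. len \<Phi> p (w \<circ> s) < len \<Phi> p w}"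

fun rprod :: "(nat \<Rightarrow> 'b \<Rightarrow> 'b) \<Rightarrow> nat \<Rightarrow> 'b \<Rightarrow> 'b" where
  "rprod r 0 = id"
| "rprod r (Suc t) = r (Suc t) \<circ> rprod r t"

end

theory Submission
  imports Defs
begin

text \<open>Everything is read off from the hyperplanes separating two alcoves. Right multiplication
  by a simple reflection changes the set of hyperplanes separating the fundamental alcove A from uA
  by exactly one hyperplane; this gives the exchange condition: if H separates A from uA, then
  r_H u is obtained from any word for u by deleting one letter. Every reflection r_H is a product
  of simple reflections, by induction on the number of hyperplanes separating A from r_H A:
  conjugate by the reflection in a wall of A among them, such a wall being found as the first
  hyperplane crossed by a segment in general position.

  The main step: let l(x) < l(xs), R a reflection, l(Rx) = l(x) + 1 and Rx \<noteq> xs. If H_R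
  separated A from xsA, the exchange condition applied to a reduced word for x followed by s would
  give Rx = xs or l(Rx) < l(x). Hence H_R separates A from RxsA, so l(Rxs) > l(xs) > l(x), that is
  l(Rxs) > l(Rx). Induction on t then proves the theorem; of the hypotheses on the r_t only
  that they are reflections is used.\<close>

lemma pos_mult_same_sign: "0 < x * y \<Longrightarrow> 0 < x * z \<Longrightarrow> 0 < y * (z::real)"
  by (auto simp: zero_less_mult_iff)

lemma mult_neg_iff_same_sign: "0 < y * z \<Longrightarrow> x * y < 0 \<longleftrightarrow> x * (z::real) < 0"
  by (auto simp: mult_less_0_iff zero_less_mult_iff)

lemma same_sign_if_close: "\<bar>y - x\<bar> < \<bar>x\<bar> \<Longrightarrow> 0 < y * (x::real)"
  by (auto simp: zero_less_mult_iff abs_if split: if_splits)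

lemma uniform_gap_to_ints:
  fixes x :: real
  assumes "\<And>m::int. x \<noteq> of_int m"
  obtains e where "0 < e" "\<And>m::int. e \<le> \<bar>x - of_int m\<bar>"
proof
  show "0 < min (x - of_int \<lfloor>x\<rfloor>) (of_int \<lfloor>x\<rfloor> + 1 - x)"
    using assms[of "\<lfloor>x\<rfloor>"] of_int_floor_le[of x] by linarith
  show "min (x - of_int \<lfloor>x\<rfloor>) (of_int \<lfloor>x\<rfloor> + 1 - x) \<le> \<bar>x - of_int m\<bar>" for m
  proof (cases "m \<le> \<lfloor>x\<rfloor>")
    case True
    hence "of_int m \<le> (of_int \<lfloor>x\<rfloor> :: real)" by linarith
    thus ?thesis using of_int_floor_le[of x] by linarith
  next
    case False
    hence "of_int \<lfloor>x\<rfloor> + 1 \<le> (of_int m :: real)" by linarith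
    thus ?thesis by linarith
  qed
qed

section \<open>Affine hyperplanes and reflections\<close>

definition hyp_fun :: "'a::euclidean_space \<Rightarrow> int \<Rightarrow> 'a \<Rightarrow> real" where
  "hyp_fun g m v = v \<bullet> g - of_int m"

abbreviation srefl :: "'a::euclidean_space \<Rightarrow> int \<Rightarrow> 'a \<Rightarrow> 'a" where
  "srefl b k \<equiv> aff_refl b (of_int k)"

lemma image_involution: "(\<And>x. f (f x) = x) \<Longrightarrow> f ` A = f -` A"
  by (auto, metis image_eqI)

lemma hyp_int_eq: "hyp g (of_int m) = {v. hyp_fun g m v = 0}"
  by (auto simp: hyp_def hyp_fun_def)

lemma hyp_fun_segment:
  "hyp_fun g m ((1 - t) *\<^sub>R a + t *\<^sub>R b) = (1 - t) * hyp_fun g m a + t * hyp_fun g m b"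
  by (simp add: hyp_fun_def inner_add_left algebra_simps)

lemma hyp_scaleR: "l \<noteq> 0 \<Longrightarrow> hyp (l *\<^sub>R g) (l * a) = hyp g a"
  by (auto simp: hyp_def)

lemma hyp_subset_imp_multiple:
  fixes g g' :: "'a::euclidean_space"
  assumes "g \<noteq> 0" "g' \<noteq> 0" "hyp g a \<subseteq> hyp g' b"
  shows "\<exists>l. l \<noteq> 0 \<and> g' = l *\<^sub>R g \<and> b = l * a"
proof -
  have gg: "g \<bullet> g > 0" using assms(1) by simp
  define x0 where "x0 = (a / (g \<bullet> g)) *\<^sub>R g"
  have x0: "x0 \<in> hyp g a" using gg by (simp add: x0_def hyp_def)
  hence x0b: "x0 \<bullet> g' = b" using assms(3) by (auto simp: hyp_def)
  have perp: "v \<bullet> g' = 0" if "v \<bullet> g = 0" for v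
  proof -
    have "x0 + v \<in> hyp g a" using x0 that by (simp add: hyp_def inner_add_left)
    hence "(x0 + v) \<bullet> g' = b" using assms(3) by (auto simp: hyp_def)
    thus ?thesis using x0b by (simp add: inner_add_left)
  qed
  define l where "l = (g' \<bullet> g) / (g \<bullet> g)"
  define u where "u = g' - l *\<^sub>R g"
  have "u \<bullet> g = 0" using gg by (simp add: u_def l_def inner_diff_left)
  moreover from this have "u \<bullet> g' = 0" by (rule perp)
  ultimately have "u \<bullet> u = 0" by (simp add: u_def inner_diff_right)
  hence g': "g' = l *\<^sub>R g" by (simp add: u_def)
  have "l \<noteq> 0" using assms(2) g' by auto
  moreover have "b = l * a" using x0b g' gg by (simp add: x0_def)
  ultimately show ?thesis using g' by blast
qed

lemma hyp_subset_imp_eq: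
  fixes g g' :: "'a::euclidean_space"
  assumes "g \<noteq> 0" "g' \<noteq> 0" "hyp g a \<subseteq> hyp g' b"
  shows "hyp g a = hyp g' b"
  using hyp_subset_imp_multiple[OF assms] hyp_scaleR by metis

lemma aff_refl_cong:
  fixes g g' :: "'a::euclidean_space"
  assumes "g \<noteq> 0" "g' \<noteq> 0" "hyp g a = hyp g' b"
  shows "aff_refl g a = aff_refl g' b"
proof
  fix x
  obtain l where l: "l \<noteq> 0" "g' = l *\<^sub>R g" "b = l * a"
    using hyp_subset_imp_multiple[OF assms(1,2)] assms(3) by blast
  have "((x \<bullet> g' - b) * (2 / (g' \<bullet> g'))) *\<^sub>R g' = ((x \<bullet> g - a) * (2 / (g \<bullet> g))) *\<^sub>R g"
    using l assms(1) by (simp add: field_simps power2_eq_square)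
  thus "aff_refl g a x = aff_refl g' b x" by (simp add: aff_refl_def)
qed

lemma hyp_eq_if_proportional_at:
  fixes g1 g2 :: "'a::euclidean_space"
  assumes "hyp_fun g1 m1 p \<noteq> 0" "hyp_fun g2 m2 p \<noteq> 0"
    and "hyp_fun g1 m1 p *\<^sub>R g2 = hyp_fun g2 m2 p *\<^sub>R g1"
  shows "hyp g1 (of_int m1) = hyp g2 (of_int m2)"
proof -
  define l where "l = hyp_fun g2 m2 p / hyp_fun g1 m1 p"
  have "l \<noteq> 0" using assms(1,2) by (simp add: l_def)
  have g2: "g2 = l *\<^sub>R g1"
    using arg_cong[OF assms(3), of "scaleR (1 / hyp_fun g1 m1 p)"] assms(1) by (simp add: l_def)
  have "hyp_fun g2 m2 p = l * hyp_fun g1 m1 p" using assms(1) by (simp add: l_def)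
  hence "of_int m2 = l * of_int m1" using g2 by (simp add: hyp_fun_def algebra_simps)
  thus ?thesis using g2 hyp_scaleR[OF \<open>l \<noteq> 0\<close>] by metis
qed

lemma hyp_fun_srefl_self: "g \<noteq> 0 \<Longrightarrow> hyp_fun g m (srefl g m v) = - hyp_fun g m v"
  by (simp add: hyp_fun_def aff_refl_def inner_diff_left field_simps)

lemma srefl_eq: "srefl g m v = v - (hyp_fun g m v * (2 / (g \<bullet> g))) *\<^sub>R g"
  by (simp add: aff_refl_def hyp_fun_def)

lemma srefl_srefl [simp]:
  assumes "g \<noteq> 0" shows "srefl g m (srefl g m v) = v"
proof -
  have "srefl g m (srefl g m v) = srefl g m v - (hyp_fun g m (srefl g m v) * (2 / (g \<bullet> g))) *\<^sub>R g"
    by (rule srefl_eq)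
  also have "\<dots> = srefl g m v + (hyp_fun g m v * (2 / (g \<bullet> g))) *\<^sub>R g"
    by (simp add: hyp_fun_srefl_self[OF assms])
  finally show ?thesis by (simp add: srefl_eq)
qed

lemma srefl_comp_srefl: "g \<noteq> 0 \<Longrightarrow> srefl g m \<circ> srefl g m = id"
  by auto

lemma srefl_fixes: "hyp_fun g m v = 0 \<Longrightarrow> srefl g m v = v"
  by (simp add: srefl_eq)

lemma srefl_image_hyp_self: "g \<noteq> 0 \<Longrightarrow> srefl g m ` hyp g (of_int m) = hyp g (of_int m)"
  by (subst image_involution) (auto simp: hyp_int_eq hyp_fun_srefl_self)

lemma hyp_fun_srefl:
  assumes "2 * (g \<bullet> b) / (b \<bullet> b) = of_int c"
  shows "hyp_fun g m (srefl b k v) = hyp_fun (g - of_int c *\<^sub>R b) (m - k * c) v"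
proof -
  have "hyp_fun g m (srefl b k v) = v \<bullet> g - (v \<bullet> b - of_int k) * (2 * (g \<bullet> b) / (b \<bullet> b)) - of_int m"
    by (simp add: hyp_fun_def aff_refl_def inner_diff_left inner_commute[of b g])
  also have "\<dots> = hyp_fun (g - of_int c *\<^sub>R b) (m - k * c) v"
    unfolding assms by (simp add: hyp_fun_def inner_diff_right algebra_simps)
  finally show ?thesis .
qed

lemma srefl_conj:
  assumes b: "b \<noteq> 0" and c: "2 * (g \<bullet> b) / (b \<bullet> b) = of_int c"
  shows "srefl b k (srefl g m (srefl b k v)) = srefl (g - of_int c *\<^sub>R b) (m - k * c) v"
proof -
  define g' where "g' = g - of_int c *\<^sub>R b"
  have cbb: "of_int c * (b \<bullet> b) = 2 * (g \<bullet> b)" using b c by (simp add: field_simps)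
  have "g' \<bullet> g' = g \<bullet> g - 2 * of_int c * (g \<bullet> b) + of_int c * (of_int c * (b \<bullet> b))"
    by (simp add: g'_def inner_diff_left inner_diff_right inner_commute algebra_simps)
  hence g'g': "g' \<bullet> g' = g \<bullet> g" using cbb by (simp add: algebra_simps)
  have lin: "srefl b k (y - t *\<^sub>R g) = srefl b k y - t *\<^sub>R g'" for y t
  proof -
    have "((y - t *\<^sub>R g) \<bullet> b - of_int k) * (2 / (b \<bullet> b))
        = (y \<bullet> b - of_int k) * (2 / (b \<bullet> b)) - t * of_int c"
      using b by (simp add: c[symmetric] inner_diff_left field_simps)
    hence "srefl b k (y - t *\<^sub>R g)
        = (y - t *\<^sub>R g) - ((y \<bullet> b - of_int k) * (2 / (b \<bullet> b)) - t * of_int c) *\<^sub>R b"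
      by (simp only: aff_refl_def)
    thus ?thesis by (simp add: aff_refl_def g'_def algebra_simps)
  qed
  define y where "y = srefl b k v"
  have "srefl b k (srefl g m y) = srefl b k y - (hyp_fun g m y * (2 / (g \<bullet> g))) *\<^sub>R g'"
    by (simp only: srefl_eq[of g m y] lin)
  also have "srefl b k y = v" using b by (simp add: y_def)
  also have "hyp_fun g m y = hyp_fun g' (m - k * c) v"
    using hyp_fun_srefl[OF c] by (simp add: y_def g'_def)
  finally have "srefl b k (srefl g m y) = srefl g' (m - k * c) v"
    by (simp only: srefl_eq[of g'] g'g')
  thus ?thesis by (simp only: y_def g'_def)
qed

definition crossing_time :: "'a::euclidean_space \<Rightarrow> 'a \<Rightarrow> 'a \<Rightarrow> int \<Rightarrow> real" where
  "crossing_time p q g m = hyp_fun g m p / (hyp_fun g m p - hyp_fun g m q)"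

lemma crossing_time_bounds:
  assumes "hyp_fun g m p * hyp_fun g m q < 0"
  shows "0 < crossing_time p q g m" "crossing_time p q g m < 1"
  using assms by (auto simp: crossing_time_def mult_less_0_iff divide_simps)

lemma crossing_point_in_hyp:
  assumes "hyp_fun g m p * hyp_fun g m q < 0"
  shows "(1 - crossing_time p q g m) *\<^sub>R p + crossing_time p q g m *\<^sub>R q \<in> hyp g (of_int m)"
proof -
  have "hyp_fun g m p \<noteq> hyp_fun g m q" using assms by auto
  thus ?thesis
    unfolding hyp_int_eq mem_Collect_eq hyp_fun_segment crossing_time_def by (simp add: field_simps)
qed

lemma sign_before_crossing:
  assumes neg: "hyp_fun g m p * hyp_fun g m q < 0" and t: "0 \<le> t" "t < crossing_time p q g m"
  shows "0 < hyp_fun g m ((1 - t) *\<^sub>R p + t *\<^sub>R q) * hyp_fun g m p"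
proof -
  let ?a = "hyp_fun g m p" and ?b = "hyp_fun g m q"
  have pos: "0 < (?a - ?b) * ?a" using neg by (auto simp: mult_less_0_iff zero_less_mult_iff)
  have "t * ((?a - ?b) * ?a) < ?a / (?a - ?b) * ((?a - ?b) * ?a)"
    using t(2) pos unfolding crossing_time_def by (rule mult_strict_right_mono)
  also have "\<dots> = ?a * ?a" using pos by auto
  finally show ?thesis unfolding hyp_fun_segment by (simp add: algebra_simps)
qed

lemma sign_on_segment:
  assumes pos: "0 < hyp_fun g m p * hyp_fun g m q" and t: "0 \<le> t" "t \<le> 1"
  shows "0 < hyp_fun g m ((1 - t) *\<^sub>R p + t *\<^sub>R q) * hyp_fun g m p"
proof -
  let ?a = "hyp_fun g m p" and ?b = "hyp_fun g m q"
  have "0 < ?a * ?a" using pos by (auto simp: zero_less_mult_iff)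
  hence "0 < (1 - t) * (?a * ?a) + t * (?a * ?b)"
    using pos t by (cases "t = 1") (auto intro: add_pos_nonneg)
  thus ?thesis unfolding hyp_fun_segment by (simp add: algebra_simps)
qed

definition crossing_normal :: "'a::euclidean_space \<Rightarrow> 'a \<times> int \<Rightarrow> 'a \<times> int \<Rightarrow> 'a" where
  "crossing_normal p i j = hyp_fun (fst i) (snd i) p *\<^sub>R fst j - hyp_fun (fst j) (snd j) p *\<^sub>R fst i"

lemma segment_meets_two_hyps:
  assumes "x \<in> closed_segment p q" "x \<in> hyp g1 (of_int m1)" "x \<in> hyp g2 (of_int m2)"
  shows "crossing_normal p (g1, m1) (g2, m2) \<bullet> q = crossing_normal p (g1, m1) (g2, m2) \<bullet> p"
proof -
  obtain t where x: "x = (1 - t) *\<^sub>R p + t *\<^sub>R q" using assms(1) by (auto simp: in_segment)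
  have "(1 - t) * hyp_fun g1 m1 p + t * hyp_fun g1 m1 q = 0"
    "(1 - t) * hyp_fun g2 m2 p + t * hyp_fun g2 m2 q = 0"
    using assms(2,3) by (simp_all add: x hyp_int_eq hyp_fun_segment)
  hence "hyp_fun g1 m1 p * hyp_fun g2 m2 q = hyp_fun g2 m2 p * hyp_fun g1 m1 q" by algebra
  thus ?thesis
    by (simp add: crossing_normal_def hyp_fun_def inner_diff_left inner_commute algebra_simps)
qed

lemma comp_invol_cancel: "s \<circ> s = id \<Longrightarrow> f \<circ> s = h \<circ> s \<Longrightarrow> f = h"
  by (metis comp_assoc comp_id)

section \<open>Separating hyperplanes\<close>

locale affine_root_system =
  fixes \<Phi> :: "'a::euclidean_space set"
  assumes root_system: "root_system \<Phi>"
begin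

lemma roots_nonzero: "g \<in> \<Phi> \<Longrightarrow> g \<noteq> 0"
  using root_system unfolding root_system_def by auto

lemma finite_roots: "finite \<Phi>"
  using root_system unfolding root_system_def by auto

lemma srefl_conj_root:
  assumes "b \<in> \<Phi>" "g \<in> \<Phi>"
  obtains g' m' where "g' \<in> \<Phi>" "\<And>v. hyp_fun g m (srefl b k v) = hyp_fun g' m' v"
    "\<And>v. srefl b k (srefl g m (srefl b k v)) = srefl g' m' v"
    "srefl b k ` hyp g (of_int m) = hyp g' (of_int m')"
proof -
  have "2 * (g \<bullet> b) / (b \<bullet> b) \<in> \<int>" using root_system assms unfolding root_system_def by blast
  then obtain c where c: "2 * (g \<bullet> b) / (b \<bullet> b) = of_int c" by (auto elim: Ints_cases)
  show ?thesis
  proof (rule that[of "g - of_int c *\<^sub>R b" "m - k * c"])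
    show "g - of_int c *\<^sub>R b \<in> \<Phi>"
      using root_system assms unfolding root_system_def c[symmetric] by blast
    show "hyp_fun g m (srefl b k v) = hyp_fun (g - of_int c *\<^sub>R b) (m - k * c) v" for v
      by (rule hyp_fun_srefl[OF c])
    show "srefl b k (srefl g m (srefl b k v)) = srefl (g - of_int c *\<^sub>R b) (m - k * c) v" for v
      by (rule srefl_conj[OF roots_nonzero[OF assms(1)] c])
    show "srefl b k ` hyp g (of_int m) = hyp (g - of_int c *\<^sub>R b) (of_int (m - k * c))"
      unfolding hyp_int_eq
      by (subst image_involution) (auto simp: roots_nonzero assms hyp_fun_srefl[OF c])
  qed
qed

lemma image_srefl_image: "b \<in> \<Phi> \<Longrightarrow> srefl b k ` srefl b k ` H = H"
  by (simp add: image_comp srefl_comp_srefl roots_nonzero)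

lemma generic_hyp_fun_nonzero: "generic \<Phi> a \<Longrightarrow> g \<in> \<Phi> \<Longrightarrow> hyp_fun g m a \<noteq> 0"
  by (auto simp: generic_def hyp_int_eq)

lemma generic_srefl:
  assumes "b \<in> \<Phi>" "generic \<Phi> a"
  shows "generic \<Phi> (srefl b k a)"
  unfolding generic_def
proof (intro ballI allI)
  fix g m assume "g \<in> \<Phi>"
  then obtain g' m' where "g' \<in> \<Phi>" "hyp_fun g m (srefl b k a) = hyp_fun g' m' a"
    using srefl_conj_root[OF assms(1)] by metis
  thus "srefl b k a \<notin> hyp g (of_int m)"
    using generic_hyp_fun_nonzero[OF assms(2)] by (simp add: hyp_int_eq)
qed

lemma hyp_fun_proportional:
  assumes "g \<in> \<Phi>" "g' \<in> \<Phi>" "hyp g (of_int m) = hyp g' (of_int m')"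
  obtains l where "l \<noteq> 0" "\<And>v. hyp_fun g' m' v = l * hyp_fun g m v"
proof -
  obtain l where "l \<noteq> 0" "g' = l *\<^sub>R g" "of_int m' = l * of_int m"
    using hyp_subset_imp_multiple[OF roots_nonzero[OF assms(1)] roots_nonzero[OF assms(2)]] assms(3)
    by blast
  thus ?thesis using that by (auto simp: hyp_fun_def algebra_simps)
qed

definition separating :: "'a \<Rightarrow> 'a \<Rightarrow> 'a set set" where
  "separating a b = {hyp g (of_int m) | g m. g \<in> \<Phi> \<and> hyp_fun g m a * hyp_fun g m b < 0}"

lemma separatingE:
  assumes "H \<in> separating a b"
  obtains g m where "g \<in> \<Phi>" "H = hyp g (of_int m)" "hyp_fun g m a * hyp_fun g m b < 0"
  using assms unfolding separating_def by blast

lemma separating_iff: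
  assumes "g \<in> \<Phi>"
  shows "hyp g (of_int m) \<in> separating a b \<longleftrightarrow> hyp_fun g m a * hyp_fun g m b < 0"
proof
  assume "hyp g (of_int m) \<in> separating a b"
  then obtain g' m' where g': "g' \<in> \<Phi>" "hyp g (of_int m) = hyp g' (of_int m')"
    and neg: "hyp_fun g' m' a * hyp_fun g' m' b < 0"
    by (metis separatingE)
  obtain l where "l \<noteq> 0" and l: "\<And>v. hyp_fun g' m' v = l * hyp_fun g m v"
    using hyp_fun_proportional[OF assms g'] by blast
  hence "0 < l * l" by (metis not_real_square_gt_zero)
  moreover have "hyp_fun g' m' a * hyp_fun g' m' b = (l * l) * (hyp_fun g m a * hyp_fun g m b)"
    by (simp add: l)
  ultimately show "hyp_fun g m a * hyp_fun g m b < 0" using neg by (auto simp: mult_less_0_iff)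
next
  assume "hyp_fun g m a * hyp_fun g m b < 0"
  thus "hyp g (of_int m) \<in> separating a b" using assms unfolding separating_def by blast
qed

lemma separating_commute: "separating a b = separating b a"
  unfolding separating_def by (auto simp: mult.commute)

lemma separating_self: "separating a a = {}"
  unfolding separating_def by (auto simp: mult_less_0_iff)

lemma finite_separating_pairs:
  "finite {(g, m). g \<in> \<Phi> \<and> hyp_fun g m a * hyp_fun g m b < 0}"
proof (rule finite_subset)
  show "{(g, m). g \<in> \<Phi> \<and> hyp_fun g m a * hyp_fun g m b < 0}
      \<subseteq> (SIGMA g:\<Phi>. {\<lceil>min (a \<bullet> g) (b \<bullet> g)\<rceil>..\<lfloor>max (a \<bullet> g) (b \<bullet> g)\<rfloor>})"
    by (auto simp: hyp_fun_def mult_less_0_iff ceiling_le_iff le_floor_iff)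
  show "finite (SIGMA g:\<Phi>. {\<lceil>min (a \<bullet> g) (b \<bullet> g)\<rceil>..\<lfloor>max (a \<bullet> g) (b \<bullet> g)\<rfloor>})"
    using finite_roots by blast
qed

lemma finite_separating: "finite (separating a b)"
proof -
  have "separating a b
      = (\<lambda>(g, m). hyp g (of_int m)) ` {(g, m). g \<in> \<Phi> \<and> hyp_fun g m a * hyp_fun g m b < 0}"
    unfolding separating_def by auto
  thus ?thesis using finite_separating_pairs by simp
qed

lemma separating_trans:
  assumes "generic \<Phi> a" "generic \<Phi> b" "generic \<Phi> c"
  shows "separating a c = sym_diff (separating a b) (separating b c)"
proof (intro set_eqI)
  fix H
  show "H \<in> separating a c \<longleftrightarrow> H \<in> sym_diff (separating a b) (separating b c)"
  proof (cases "\<exists>g m. g \<in> \<Phi> \<and> H = hyp g (of_int m)")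
    case False
    hence "H \<notin> separating x y" for x y by (blast elim: separatingE)
    thus ?thesis by blast
  next
    case True
    then obtain g m where g: "g \<in> \<Phi>" "H = hyp g (of_int m)" by blast
    have "hyp_fun g m a \<noteq> 0" "hyp_fun g m b \<noteq> 0" "hyp_fun g m c \<noteq> 0"
      using assms g(1) generic_hyp_fun_nonzero by auto
    thus ?thesis unfolding g(2)
      by (simp only: separating_iff[OF g(1)] Un_iff Diff_iff) (auto simp: mult_less_0_iff)
  qed
qed

lemma separating_srefl:
  assumes b: "b \<in> \<Phi>"
  shows "separating (srefl b k a) (srefl b k c) = (`) (srefl b k) ` separating a c"
proof -
  have "H \<in> separating (srefl b k a) (srefl b k c) \<longleftrightarrow> srefl b k ` H \<in> separating a c" for H
  proof
    assume "H \<in> separating (srefl b k a) (srefl b k c)"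
    then obtain g m where g: "g \<in> \<Phi>" "H = hyp g (of_int m)"
      and neg: "hyp_fun g m (srefl b k a) * hyp_fun g m (srefl b k c) < 0"
      by (rule separatingE)
    obtain g' m' where "g' \<in> \<Phi>" "\<And>v. hyp_fun g m (srefl b k v) = hyp_fun g' m' v"
      "srefl b k ` hyp g (of_int m) = hyp g' (of_int m')"
      using srefl_conj_root[OF b g(1)] by metis
    thus "srefl b k ` H \<in> separating a c" using g(2) neg by (simp add: separating_iff)
  next
    assume "srefl b k ` H \<in> separating a c"
    then obtain g m where g: "g \<in> \<Phi>" "srefl b k ` H = hyp g (of_int m)"
      and neg: "hyp_fun g m a * hyp_fun g m c < 0"
      by (rule separatingE)
    obtain g' m' where g': "g' \<in> \<Phi>" "\<And>v. hyp_fun g m (srefl b k v) = hyp_fun g' m' v"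
      "srefl b k ` hyp g (of_int m) = hyp g' (of_int m')"
      using srefl_conj_root[OF b g(1)] by metis
    have "H = hyp g' (of_int m')" using g(2) g'(3) image_srefl_image[OF b] by metis
    moreover have "hyp_fun g' m' (srefl b k v) = hyp_fun g m v" for v
      using g'(2)[of "srefl b k v"] roots_nonzero[OF b] by simp
    ultimately show "H \<in> separating (srefl b k a) (srefl b k c)"
      using g'(1) neg by (simp add: separating_iff)
  qed
  moreover have "(`) (srefl b k) ` separating a c = (`) (srefl b k) -` separating a c"
    by (rule image_involution) (rule image_srefl_image[OF b])
  ultimately show ?thesis by auto
qed

lemma signs_near_generic:
  assumes q: "generic \<Phi> q"
  obtains \<delta> where "0 < \<delta>"
    "\<And>q' g m. dist q q' < \<delta> \<Longrightarrow> g \<in> \<Phi> \<Longrightarrow> 0 < hyp_fun g m q' * hyp_fun g m q"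
proof -
  have "\<exists>e>0. \<forall>m::int. e \<le> \<bar>hyp_fun g m q\<bar>" if "g \<in> \<Phi>" for g
    using uniform_gap_to_ints[of "q \<bullet> g"] generic_hyp_fun_nonzero[OF q that]
    by (metis hyp_fun_def right_minus_eq)
  then obtain e where e: "\<And>g. g \<in> \<Phi> \<Longrightarrow> 0 < e g" "\<And>g m. g \<in> \<Phi> \<Longrightarrow> e g \<le> \<bar>hyp_fun g m q\<bar>"
    by metis
  define \<delta> where "\<delta> = Min (insert 1 ((\<lambda>g. e g / norm g) ` \<Phi>))"
  have "0 < \<delta>" using finite_roots e(1) roots_nonzero by (simp add: \<delta>_def)
  moreover have "0 < hyp_fun g m q' * hyp_fun g m q" if "dist q q' < \<delta>" "g \<in> \<Phi>" for q' g m
  proof (rule same_sign_if_close)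
    have ng: "0 < norm g" using roots_nonzero[OF that(2)] by simp
    have "\<bar>hyp_fun g m q' - hyp_fun g m q\<bar> = \<bar>(q' - q) \<bullet> g\<bar>"
      by (simp add: hyp_fun_def inner_diff_left)
    also have "\<dots> \<le> dist q q' * norm g"
      using Cauchy_Schwarz_ineq2[of "q' - q" g] by (simp add: dist_norm norm_minus_commute)
    also have "\<dots> < \<delta> * norm g" using that(1) ng by simp
    also have "\<dots> \<le> e g / norm g * norm g"
    proof (rule mult_right_mono)
      show "\<delta> \<le> e g / norm g" unfolding \<delta>_def using that(2) finite_roots by (intro Min_le) auto
    qed simp
    also have "\<dots> \<le> \<bar>hyp_fun g m q\<bar>" using e(2)[OF that(2)] ng by simp
    finally show "\<bar>hyp_fun g m q' - hyp_fun g m q\<bar> < \<bar>hyp_fun g m q\<bar>" .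
  qed
  ultimately show ?thesis using that by blast
qed

lemma alcove_neighbourhood:
  assumes q: "generic \<Phi> q"
  obtains \<delta> where "0 < \<delta>" "\<And>q'. dist q q' < \<delta> \<Longrightarrow> generic \<Phi> q'"
    "\<And>q' a. dist q q' < \<delta> \<Longrightarrow> separating a q' = separating a q"
proof -
  obtain \<delta> where "0 < \<delta>"
    and sign: "\<And>q' g m. dist q q' < \<delta> \<Longrightarrow> g \<in> \<Phi> \<Longrightarrow> 0 < hyp_fun g m q' * hyp_fun g m q"
    using signs_near_generic[OF q] by blast
  show ?thesis
  proof (rule that[OF \<open>0 < \<delta>\<close>])
    show "generic \<Phi> q'" if "dist q q' < \<delta>" for q'
      unfolding generic_def
    proof (intro ballI allI)
      fix g m assume "g \<in> \<Phi>"
      hence "hyp_fun g m q' \<noteq> 0" using sign[OF that, of g m] by auto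
      thus "q' \<notin> hyp g (of_int m)" by (simp add: hyp_int_eq)
    qed
    show "separating a q' = separating a q" if "dist q q' < \<delta>" for q' a
    proof -
      have "hyp_fun g m a * hyp_fun g m q' < 0 \<longleftrightarrow> hyp_fun g m a * hyp_fun g m q < 0"
        if "g \<in> \<Phi>" for g m
        using sign[OF \<open>dist q q' < \<delta>\<close> that, of m] by (rule mult_neg_iff_same_sign)
      thus ?thesis unfolding separating_def by (simp cong: conj_cong)
    qed
  qed
qed

definition distinct_crossings :: "'a \<Rightarrow> 'a \<Rightarrow> bool" where
  "distinct_crossings p q \<longleftrightarrow> (\<forall>x \<in> closed_segment p q. \<forall>H1 \<in> separating p q. \<forall>H2 \<in> separating p q.
     x \<in> H1 \<longrightarrow> x \<in> H2 \<longrightarrow> H1 = H2)"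

lemma crossing_normal_nonzero:
  assumes p: "generic \<Phi> p" and g: "g1 \<in> \<Phi>" "g2 \<in> \<Phi>"
    and ne: "hyp g1 (of_int m1) \<noteq> hyp g2 (of_int m2)"
  shows "crossing_normal p (g1, m1) (g2, m2) \<noteq> 0"
proof
  assume "crossing_normal p (g1, m1) (g2, m2) = 0"
  hence "hyp_fun g1 m1 p *\<^sub>R g2 = hyp_fun g2 m2 p *\<^sub>R g1" by (simp add: crossing_normal_def)
  with ne show False
    using hyp_eq_if_proportional_at generic_hyp_fun_nonzero[OF p g(1)] generic_hyp_fun_nonzero[OF p g(2)]
    by blast
qed

lemma negligible_crossing_planes:
  assumes p: "generic \<Phi> p" and P: "finite P" "fst ` P \<subseteq> \<Phi>"
  shows "negligible (\<Union>(i, j) \<in> P \<times> P. {x. hyp (fst i) (of_int (snd i)) \<noteq> hyp (fst j) (of_int (snd j))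
    \<and> crossing_normal p i j \<bullet> x = crossing_normal p i j \<bullet> p})"
proof (intro negligible_Union finite_imageI)
  show "finite (P \<times> P)" using P(1) by blast
next
  fix T
  assume "T \<in> (\<lambda>(i, j). {x. hyp (fst i) (of_int (snd i)) \<noteq> hyp (fst j) (of_int (snd j))
    \<and> crossing_normal p i j \<bullet> x = crossing_normal p i j \<bullet> p}) ` (P \<times> P)"
  then obtain g1 m1 g2 m2 where "(g1, m1) \<in> P" "(g2, m2) \<in> P"
    and T: "T = {x. hyp g1 (of_int m1) \<noteq> hyp g2 (of_int m2)
      \<and> crossing_normal p (g1, m1) (g2, m2) \<bullet> x = crossing_normal p (g1, m1) (g2, m2) \<bullet> p}"
    by force
  hence g: "g1 \<in> \<Phi>" "g2 \<in> \<Phi>" using P(2) by force+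
  show "negligible T"
  proof (cases "hyp g1 (of_int m1) = hyp g2 (of_int m2)")
    case True
    thus ?thesis using T by simp
  next
    case False
    thus ?thesis using T crossing_normal_nonzero[OF p g False] by (simp add: negligible_hyperplane)
  qed
qed

text \<open>The endpoints q' for which two crossings coincide lie on finitely many hyperplanes through p;
  a point of the alcove of q avoiding them will do.\<close>

lemma distinct_crossings_exists:
  assumes p: "generic \<Phi> p" and q: "generic \<Phi> q"
  obtains q' where "generic \<Phi> q'" "separating p q' = separating p q" "distinct_crossings p q'"
proof -
  let ?P = "{(g, m). g \<in> \<Phi> \<and> hyp_fun g m p * hyp_fun g m q < 0}"
  define B where "B = (\<Union>(i, j) \<in> ?P \<times> ?P. {x. hyp (fst i) (of_int (snd i)) \<noteq> hyp (fst j) (of_int (snd j))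
    \<and> crossing_normal p i j \<bullet> x = crossing_normal p i j \<bullet> p})"
  have "negligible B"
    unfolding B_def by (rule negligible_crossing_planes[OF p finite_separating_pairs]) auto
  obtain \<delta> where "0 < \<delta>" and near: "\<And>q'. dist q q' < \<delta> \<Longrightarrow> generic \<Phi> q'"
    "\<And>q'. dist q q' < \<delta> \<Longrightarrow> separating p q' = separating p q"
    using alcove_neighbourhood[OF q] by metis
  have "\<not> ball q \<delta> \<subseteq> B"
    using \<open>negligible B\<close> open_not_negligible[of "ball q \<delta>"] \<open>0 < \<delta>\<close> negligible_subset by auto
  then obtain q' where "dist q q' < \<delta>" "q' \<notin> B" by (meson mem_ball subsetI)
  hence q': "generic \<Phi> q'" and eq: "separating p q' = separating p q" using near by auto
  have "distinct_crossings p q'"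
    unfolding distinct_crossings_def
  proof (intro ballI impI)
    fix x H1 H2
    assume seg: "x \<in> closed_segment p q'" and H1: "H1 \<in> separating p q'"
      and H2: "H2 \<in> separating p q'" and x: "x \<in> H1" "x \<in> H2"
    obtain g1 m1 where g1: "g1 \<in> \<Phi>" "H1 = hyp g1 (of_int m1)" using H1 by (rule separatingE)
    obtain g2 m2 where g2: "g2 \<in> \<Phi>" "H2 = hyp g2 (of_int m2)" using H2 by (rule separatingE)
    have "(g1, m1) \<in> ?P" "(g2, m2) \<in> ?P" using H1 H2 eq g1 g2 by (simp_all add: separating_iff)
    moreover have "crossing_normal p (g1, m1) (g2, m2) \<bullet> q' = crossing_normal p (g1, m1) (g2, m2) \<bullet> p"
      using segment_meets_two_hyps[OF seg] x g1(2) g2(2) by simp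
    ultimately have "hyp g1 (of_int m1) \<noteq> hyp g2 (of_int m2) \<Longrightarrow> q' \<in> B"
      unfolding B_def by (intro UN_I[of "((g1, m1), (g2, m2))"]) auto
    thus "H1 = H2" using \<open>q' \<notin> B\<close> g1(2) g2(2) by blast
  qed
  with q' eq show ?thesis using that by blast
qed

end

section \<open>The fundamental alcove and the exchange condition\<close>

definition word_prod :: "('b \<Rightarrow> 'b) list \<Rightarrow> 'b \<Rightarrow> 'b" where
  "word_prod ws = foldr (\<circ>) ws id"

lemma word_prod_simps [simp]:
  "word_prod [] = id"
  "word_prod (f # ws) = f \<circ> word_prod ws"
  "word_prod (ws @ vs) = word_prod ws \<circ> word_prod vs"
  by (simp_all add: word_prod_def) (induct ws, auto)

locale alcove = affine_root_system +
  fixes p0 :: 'a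
  assumes generic_p0: "generic \<Phi> p0"
begin

abbreviation SR :: "('a \<Rightarrow> 'a) set" where
  "SR \<equiv> simple_refls \<Phi> p0"

abbreviation L :: "('a \<Rightarrow> 'a) \<Rightarrow> nat" where
  "L \<equiv> len \<Phi> p0"

lemma simple_reflE:
  assumes "s \<in> SR"
  obtains b k where "b \<in> \<Phi>" "is_wall \<Phi> p0 b k" "s = srefl b k"
  using assms unfolding simple_refls_def by blast

lemma simple_refl_invol: "s \<in> SR \<Longrightarrow> s \<circ> s = id"
  by (erule simple_reflE) (simp add: srefl_comp_srefl roots_nonzero)

lemma separating_wall:
  assumes b: "b \<in> \<Phi>" and wall: "is_wall \<Phi> p0 b k"
  shows "separating p0 (srefl b k p0) = {hyp b (of_int k)}"
proof -
  obtain x where x: "x \<in> hyp b (of_int k)" and xwall: "\<And>g m. g \<in> \<Phi>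
      \<Longrightarrow> hyp g (of_int m) \<noteq> hyp b (of_int k) \<Longrightarrow> 0 < hyp_fun g m x * hyp_fun g m p0"
    using wall unfolding is_wall_def hyp_fun_def by blast
  have "hyp_fun b k p0 \<noteq> 0" using generic_hyp_fun_nonzero[OF generic_p0 b] .
  hence "0 < hyp_fun b k p0 * hyp_fun b k p0" by (metis not_real_square_gt_zero)
  hence "hyp b (of_int k) \<in> separating p0 (srefl b k p0)"
    by (simp add: separating_iff[OF b] hyp_fun_srefl_self roots_nonzero b)
  moreover have "H = hyp b (of_int k)" if H: "H \<in> separating p0 (srefl b k p0)" for H
  proof (rule ccontr)
    assume ne: "H \<noteq> hyp b (of_int k)"
    from H obtain g m where g: "g \<in> \<Phi>" "H = hyp g (of_int m)"
      and neg: "hyp_fun g m p0 * hyp_fun g m (srefl b k p0) < 0"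
      by (rule separatingE)
    obtain g' m' where g': "g' \<in> \<Phi>" "\<And>v. hyp_fun g m (srefl b k v) = hyp_fun g' m' v"
      "srefl b k ` hyp g (of_int m) = hyp g' (of_int m')"
      using srefl_conj_root[OF b g(1)] by metis
    have "hyp g' (of_int m') \<noteq> hyp b (of_int k)"
      using ne g(2) g'(3) image_srefl_image[OF b] srefl_image_hyp_self[OF roots_nonzero[OF b]] by metis
    hence "0 < hyp_fun g' m' x * hyp_fun g' m' p0" using xwall[OF g'(1)] by blast
    moreover have "srefl b k x = x" using x by (simp add: hyp_int_eq srefl_fixes)
    ultimately have "0 < hyp_fun g m x * hyp_fun g m (srefl b k p0)" using g'(2) by metis
    moreover have "0 < hyp_fun g m x * hyp_fun g m p0" using xwall[OF g(1)] ne g(2) by blast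
    ultimately have "0 < hyp_fun g m (srefl b k p0) * hyp_fun g m p0" by (rule pos_mult_same_sign)
    thus False using neg by (simp add: mult.commute)
  qed
  ultimately show ?thesis by blast
qed

lemma separating_simple:
  assumes b: "b \<in> \<Phi>" "is_wall \<Phi> p0 b k" and v: "generic \<Phi> v"
  shows "separating p0 (srefl b k v) = sym_diff {hyp b (of_int k)} ((`) (srefl b k) ` separating p0 v)"
  using separating_trans[OF generic_p0 generic_srefl[OF b(1) generic_p0, where k = k]
      generic_srefl[OF b(1) v, where k = k]]
  by (simp add: separating_wall[OF b] separating_srefl[OF b(1)])

lemma card_separating_simple:
  assumes b: "b \<in> \<Phi>" "is_wall \<Phi> p0 b k" and v: "generic \<Phi> v"
    and K: "hyp b (of_int k) \<in> separating p0 v"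
  shows "card (separating p0 (srefl b k v)) + 1 = card (separating p0 v)"
proof -
  let ?S = "(`) (srefl b k) ` separating p0 v"
  have "hyp b (of_int k) \<in> ?S"
    using K srefl_image_hyp_self[OF roots_nonzero[OF b(1)]] by (metis image_eqI)
  hence "sym_diff {hyp b (of_int k)} ?S = ?S - {hyp b (of_int k)}" by blast
  hence "separating p0 (srefl b k v) = ?S - {hyp b (of_int k)}"
    by (simp only: separating_simple[OF b v])
  moreover have "card ?S = card (separating p0 v)"
    by (rule card_image, rule inj_on_inverseI[where g = "(`) (srefl b k)"])
      (rule image_srefl_image[OF b(1)])
  moreover have "finite ?S" using finite_separating by blast
  ultimately show ?thesis using \<open>hyp b (of_int k) \<in> ?S\<close> card.remove by fastforce
qed

definition simple_prod :: "('a \<Rightarrow> 'a) \<Rightarrow> bool" where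
  "simple_prod u \<longleftrightarrow> (\<exists>ws. set ws \<subseteq> SR \<and> u = word_prod ws)"

lemma simple_prod_comp: "simple_prod u \<Longrightarrow> simple_prod v \<Longrightarrow> simple_prod (u \<circ> v)"
  unfolding simple_prod_def by (metis word_prod_simps(3) set_append le_sup_iff)

lemma simple_prod_simple: "s \<in> SR \<Longrightarrow> simple_prod s"
  unfolding simple_prod_def by (rule exI[of _ "[s]"]) simp

lemma len_le_length: "set ws \<subseteq> SR \<Longrightarrow> L (word_prod ws) \<le> length ws"
  unfolding len_def word_prod_def by (rule Least_le) blast

lemma reduced_word:
  assumes "simple_prod u"
  obtains ws where "length ws = L u" "set ws \<subseteq> SR" "u = word_prod ws"
proof -
  have "\<exists>ws. length ws = L u \<and> set ws \<subseteq> SR \<and> u = word_prod ws"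
    unfolding len_def word_prod_def
  proof (rule LeastI_ex)
    show "\<exists>n ws. length ws = n \<and> set ws \<subseteq> SR \<and> u = foldr (\<circ>) ws id"
      using assms unfolding simple_prod_def word_prod_def by blast
  qed
  thus ?thesis using that by blast
qed

lemma len_eq_if_not_simple_prod:
  assumes "\<not> simple_prod u" "\<not> simple_prod v"
  shows "L u = L v"
proof -
  have "(\<lambda>n. \<exists>ws. length ws = n \<and> set ws \<subseteq> SR \<and> u = foldr (\<circ>) ws id) = (\<lambda>n. False)"
       "(\<lambda>n. \<exists>ws. length ws = n \<and> set ws \<subseteq> SR \<and> v = foldr (\<circ>) ws id) = (\<lambda>n. False)"
    using assms unfolding simple_prod_def word_prod_def by auto
  thus ?thesis unfolding len_def by simp
qed

lemma generic_word_prod: "set ws \<subseteq> SR \<Longrightarrow> generic \<Phi> a \<Longrightarrow> generic \<Phi> (word_prod ws a)"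
  by (induction ws) (auto elim!: simple_reflE intro: generic_srefl)

lemma generic_simple_prod: "simple_prod u \<Longrightarrow> generic \<Phi> (u p0)"
  unfolding simple_prod_def using generic_word_prod generic_p0 by blast

lemma exchange:
  assumes "set ws \<subseteq> SR" "g \<in> \<Phi>" "hyp g (of_int m) \<in> separating p0 (word_prod ws p0)"
  shows "\<exists>us t vs. ws = us @ t # vs \<and> srefl g m \<circ> word_prod ws = word_prod (us @ vs)"
  using assms
proof (induction ws arbitrary: g m)
  case Nil
  thus ?case by (simp add: separating_self)
next
  case (Cons s ws)
  from Cons.prems(1) have ws: "set ws \<subseteq> SR" and "s \<in> SR" by auto
  then obtain b k where b: "b \<in> \<Phi>" "is_wall \<Phi> p0 b k" and s: "s = srefl b k"
    by (elim simple_reflE)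
  let ?v = "word_prod ws p0"
  have "hyp g (of_int m) \<in> sym_diff {hyp b (of_int k)} ((`) s ` separating p0 ?v)"
    using Cons.prems(3) separating_simple[OF b generic_word_prod[OF ws generic_p0]] s by simp
  then consider "hyp g (of_int m) = hyp b (of_int k)" | "s ` hyp g (of_int m) \<in> separating p0 ?v"
    using image_srefl_image[OF b(1)] s by auto
  thus ?case
  proof cases
    case 1
    hence "srefl g m = s" using aff_refl_cong roots_nonzero b(1) Cons.prems(2) s by metis
    hence "srefl g m \<circ> word_prod (s # ws) = word_prod ([] @ ws)"
      using simple_refl_invol[OF \<open>s \<in> SR\<close>] by (simp add: comp_assoc[symmetric])
    thus ?thesis by blast
  next
    case 2
    obtain g' m' where g': "g' \<in> \<Phi>" "\<And>v. s (srefl g m (s v)) = srefl g' m' v"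
      "s ` hyp g (of_int m) = hyp g' (of_int m')"
      using srefl_conj_root[OF b(1) Cons.prems(2)] s by metis
    have "hyp g' (of_int m') \<in> separating p0 ?v" using 2 g'(3) by simp
    then obtain us t vs where split: "ws = us @ t # vs"
      and IH: "srefl g' m' \<circ> word_prod ws = word_prod (us @ vs)"
      using Cons.IH[OF ws g'(1)] by blast
    have "srefl g m \<circ> s = s \<circ> srefl g' m'"
    proof
      fix v
      have "srefl g m (s v) = s (s (srefl g m (s v)))" using roots_nonzero[OF b(1)] s by simp
      thus "(srefl g m \<circ> s) v = (s \<circ> srefl g' m') v" using g'(2) by simp
    qed
    hence "srefl g m \<circ> word_prod (s # ws) = word_prod ((s # us) @ vs)"
      using IH by (simp add: comp_assoc[symmetric]) (simp add: comp_assoc)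
    thus ?thesis using split by (metis append_Cons)
  qed
qed

lemma len_srefl_comp_less:
  assumes u: "simple_prod u" and g: "g \<in> \<Phi>" and H: "hyp g (of_int m) \<in> separating p0 (u p0)"
  shows "L (srefl g m \<circ> u) < L u"
proof -
  obtain ws where ws: "length ws = L u" "set ws \<subseteq> SR" "u = word_prod ws"
    using u by (rule reduced_word)
  then obtain us t vs where split: "ws = us @ t # vs" and R: "srefl g m \<circ> u = word_prod (us @ vs)"
    using exchange[OF ws(2) g] H by blast
  have "set (us @ vs) \<subseteq> SR" using ws(2) split by auto
  hence "L (srefl g m \<circ> u) \<le> length (us @ vs)" unfolding R by (rule len_le_length)
  thus ?thesis using ws(1) split by simp
qed

lemma exchange_right:
  assumes x: "simple_prod x" and s: "s \<in> SR" and g: "g \<in> \<Phi>"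
    and H: "hyp g (of_int m) \<in> separating p0 ((x \<circ> s) p0)"
  shows "srefl g m \<circ> x = x \<circ> s \<or> L (srefl g m \<circ> x) < L x"
proof -
  obtain ws where ws: "length ws = L x" "set ws \<subseteq> SR" "x = word_prod ws"
    using x by (rule reduced_word)
  have wss: "set (ws @ [s]) \<subseteq> SR" using ws(2) s by auto
  have xs: "x \<circ> s = word_prod (ws @ [s])" using ws(3) by simp
  obtain us t vs where split: "ws @ [s] = us @ t # vs"
    and R0: "srefl g m \<circ> word_prod (ws @ [s]) = word_prod (us @ vs)"
    using exchange[OF wss g] H xs by (metis comp_apply)
  have R: "srefl g m \<circ> x \<circ> s = word_prod (us @ vs)" using R0 xs by (simp only: comp_assoc)
  have ss: "s \<circ> s = id" by (rule simple_refl_invol[OF s])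
  show ?thesis
  proof (cases vs rule: rev_cases)
    case Nil
    hence "us = ws" using split by simp
    hence "srefl g m \<circ> x \<circ> s = x \<circ> s \<circ> s" using R Nil ws(3) ss by (simp add: comp_assoc)
    hence "srefl g m \<circ> x = x \<circ> s" using comp_invol_cancel[OF ss] by blast
    thus ?thesis ..
  next
    case (snoc vs' t')
    hence "ws = us @ t # vs'" "t' = s" using split by auto
    hence "srefl g m \<circ> x \<circ> s = word_prod (us @ vs') \<circ> s" using R snoc by (simp add: comp_assoc)
    hence eq: "srefl g m \<circ> x = word_prod (us @ vs')" using comp_invol_cancel[OF ss] by blast
    have "set (us @ vs') \<subseteq> SR" using ws(2) \<open>ws = us @ t # vs'\<close> by auto
    hence "L (srefl g m \<circ> x) \<le> length (us @ vs')" unfolding eq by (rule len_le_length)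
    thus ?thesis using ws(1) \<open>ws = us @ t # vs'\<close> by simp
  qed
qed

lemma separating_srefl_self:
  assumes g: "g \<in> \<Phi>" and a: "generic \<Phi> a" and H: "hyp g (of_int m) \<notin> separating p0 a"
  shows "hyp g (of_int m) \<in> separating p0 (srefl g m a)"
proof -
  have "hyp_fun g m p0 \<noteq> 0" "hyp_fun g m a \<noteq> 0"
    using generic_hyp_fun_nonzero generic_p0 a g by auto
  thus ?thesis using H unfolding separating_iff[OF g] hyp_fun_srefl_self[OF roots_nonzero[OF g]]
    by (auto simp: mult_less_0_iff zero_less_mult_iff)
qed

lemma first_crossing_is_wall:
  assumes q: "generic \<Phi> q" and ne: "separating p0 q \<noteq> {}"
    and dc: "distinct_crossings p0 q"
  obtains b k where "b \<in> \<Phi>" "is_wall \<Phi> p0 b k" "hyp b (of_int k) \<in> separating p0 q"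
proof -
  let ?P = "{(g, m). g \<in> \<Phi> \<and> hyp_fun g m p0 * hyp_fun g m q < 0}"
  let ?ct = "\<lambda>(g, m). crossing_time p0 q g m"
  have "?P \<noteq> {}" using ne by (auto elim!: separatingE)
  hence "Min (?ct ` ?P) \<in> ?ct ` ?P" using finite_separating_pairs by (intro Min_in) auto
  then obtain i where i: "i \<in> ?P" and i_min: "?ct i = Min (?ct ` ?P)" by (rule imageE) simp
  obtain b k where bk_i: "i = (b, k)" by (cases i)
  have b: "b \<in> \<Phi>" and neg: "hyp_fun b k p0 * hyp_fun b k q < 0" using i bk_i by auto
  define t where "t = crossing_time p0 q b k"
  have min: "t \<le> crossing_time p0 q g m" if "(g, m) \<in> ?P" for g m
  proof -
    have "t = Min (?ct ` ?P)" using i_min bk_i by (simp add: t_def)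
    also have "\<dots> \<le> ?ct (g, m)" using that finite_separating_pairs by (intro Min_le) auto
    finally show ?thesis by simp
  qed
  have t: "0 < t" "t < 1" using crossing_time_bounds[OF neg] by (simp_all add: t_def)
  define x where "x = (1 - t) *\<^sub>R p0 + t *\<^sub>R q"
  have seg: "x \<in> closed_segment p0 q" using t by (auto simp: x_def in_segment intro!: exI[of _ t])
  have bx: "x \<in> hyp b (of_int k)" using crossing_point_in_hyp[OF neg] by (simp add: x_def t_def)
  have "0 < hyp_fun g m x * hyp_fun g m p0"
    if g: "g \<in> \<Phi>" and ne: "hyp g (of_int m) \<noteq> hyp b (of_int k)" for g m
  proof (cases "(g, m) \<in> ?P")
    case True
    hence neg': "hyp_fun g m p0 * hyp_fun g m q < 0" by simp
    have "crossing_time p0 q g m \<noteq> t"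
    proof
      assume "crossing_time p0 q g m = t"
      hence "x \<in> hyp g (of_int m)" using crossing_point_in_hyp[OF neg'] by (simp add: x_def)
      moreover have "hyp g (of_int m) \<in> separating p0 q" "hyp b (of_int k) \<in> separating p0 q"
        using g neg' b neg by (simp_all add: separating_iff)
      ultimately show False using dc seg bx ne unfolding distinct_crossings_def by blast
    qed
    hence "t < crossing_time p0 q g m" using min[OF True] by simp
    thus ?thesis using sign_before_crossing[OF neg'] t by (simp add: x_def)
  next
    case False
    hence "\<not> hyp_fun g m p0 * hyp_fun g m q < 0" using g by simp
    moreover have "hyp_fun g m p0 * hyp_fun g m q \<noteq> 0"
      using generic_hyp_fun_nonzero[OF generic_p0 g] generic_hyp_fun_nonzero[OF q g] by simp
    ultimately have "0 < hyp_fun g m p0 * hyp_fun g m q" by linarith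
    thus ?thesis unfolding x_def using t by (intro sign_on_segment) auto
  qed
  hence "is_wall \<Phi> p0 b k" using bx unfolding is_wall_def hyp_fun_def by blast
  moreover have "hyp b (of_int k) \<in> separating p0 q" using b neg by (simp add: separating_iff)
  ultimately show ?thesis using b that by blast
qed

lemma wall_separating_exists:
  assumes q: "generic \<Phi> q" and ne: "separating p0 q \<noteq> {}"
  obtains b k where "b \<in> \<Phi>" "is_wall \<Phi> p0 b k" "hyp b (of_int k) \<in> separating p0 q"
proof -
  obtain q' where q': "generic \<Phi> q'" and eq: "separating p0 q' = separating p0 q"
    and dc: "distinct_crossings p0 q'"
    using distinct_crossings_exists[OF generic_p0 q] by blast
  have "separating p0 q' \<noteq> {}" using eq ne by simp
  then obtain b k where "b \<in> \<Phi>" "is_wall \<Phi> p0 b k" "hyp b (of_int k) \<in> separating p0 q'"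
    using first_crossing_is_wall[OF q' _ dc] by blast
  thus ?thesis using eq by (intro that) auto
qed

section \<open>Reflections are products of simple reflections\<close>

lemma separating_srefl_invariant:
  assumes "g \<in> \<Phi>"
  shows "(`) (srefl g m) ` separating p0 (srefl g m p0) = separating p0 (srefl g m p0)"
  using separating_srefl[OF assms, of m p0 "srefl g m p0"] roots_nonzero[OF assms]
  by (simp add: separating_commute)

lemma srefl_moves_separating_hyp:
  assumes g: "g \<in> \<Phi>" and b: "b \<in> \<Phi>" and ne: "hyp b (of_int k) \<noteq> hyp g (of_int m)"
    and K: "hyp b (of_int k) \<in> separating p0 (srefl g m p0)"
  shows "srefl g m ` hyp b (of_int k) \<noteq> hyp b (of_int k)"
proof
  assume fixed: "srefl g m ` hyp b (of_int k) = hyp b (of_int k)"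
  \<comment> \<open>then s_{g,m} rescales the affine function of H_{b,k} by some l: l = 1 contradicts the
    separation of p0 from its mirror image, l \<noteq> 1 forces H_{g,m} \<subseteq> H_{b,k}\<close>
  obtain b' k' where b': "b' \<in> \<Phi>" "\<And>v. hyp_fun b k (srefl g m v) = hyp_fun b' k' v"
    "srefl g m ` hyp b (of_int k) = hyp b' (of_int k')"
    using srefl_conj_root[OF g b] by metis
  obtain l where l: "\<And>v. hyp_fun b k v = l * hyp_fun b' k' v"
    using hyp_fun_proportional[OF b'(1) b] b'(3) fixed by metis
  hence rel: "hyp_fun b k v = l * hyp_fun b k (srefl g m v)" for v using b'(2) by simp
  show False
  proof (cases "l = 1")
    case True
    hence "hyp_fun b k (srefl g m p0) = hyp_fun b k p0" using rel[of p0] by simp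
    thus False using K separating_iff[OF b] by (auto simp: mult_less_0_iff)
  next
    case False
    have "hyp g (of_int m) \<subseteq> hyp b (of_int k)"
    proof
      fix v assume "v \<in> hyp g (of_int m)"
      hence "srefl g m v = v" by (simp add: hyp_int_eq srefl_fixes)
      hence "(1 - l) * hyp_fun b k v = 0" using rel[of v] by (simp add: algebra_simps)
      thus "v \<in> hyp b (of_int k)" using False by (simp add: hyp_int_eq)
    qed
    thus False using hyp_subset_imp_eq roots_nonzero g b ne by metis
  qed
qed

lemma card_separating_conj_wall:
  assumes g: "g \<in> \<Phi>" and b: "b \<in> \<Phi>" "is_wall \<Phi> p0 b k"
    and K: "hyp b (of_int k) \<in> separating p0 (srefl g m p0)"
    and ne: "hyp b (of_int k) \<noteq> hyp g (of_int m)"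
  shows "card (separating p0 (srefl b k (srefl g m (srefl b k p0)))) + 2
    = card (separating p0 (srefl g m p0))"
proof -
  let ?N = "separating p0 (srefl g m p0)" and ?RK = "srefl g m ` hyp b (of_int k)"
  have gen: "generic \<Phi> (srefl g m (srefl b k p0))"
    by (intro generic_srefl g b(1) generic_p0)
  have RK: "?RK \<in> ?N" using separating_srefl_invariant[OF g] K by blast
  have "separating (srefl g m p0) (srefl g m (srefl b k p0)) = {?RK}"
    using separating_srefl[OF g] separating_wall[OF b] by simp
  hence "separating p0 (srefl g m (srefl b k p0)) = ?N - {?RK}"
    using separating_trans[OF generic_p0 generic_srefl[OF g generic_p0, where k = m] gen] RK by auto
  moreover have "hyp b (of_int k) \<in> ?N - {?RK}"
    using K srefl_moves_separating_hyp[OF g b(1) ne K] by auto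
  ultimately have "card (separating p0 (srefl b k (srefl g m (srefl b k p0)))) + 1 = card (?N - {?RK})"
    using card_separating_simple[OF b gen] by simp
  moreover have "card (?N - {?RK}) + 1 = card ?N"
    using card.remove[OF finite_separating RK] by simp
  ultimately show ?thesis by simp
qed

text \<open>Induction on the number of hyperplanes separating p0 from its mirror image, conjugating by
  the reflection in a wall among them.\<close>

lemma srefl_simple_prod:
  assumes "g \<in> \<Phi>"
  shows "simple_prod (srefl g m)"
proof -
  have "\<forall>g m. g \<in> \<Phi> \<longrightarrow> card (separating p0 (srefl g m p0)) = n \<longrightarrow> simple_prod (srefl g m)" for n
  proof (induction n rule: less_induct)
    case (less n)
    show ?case
    proof (intro allI impI)
      fix g m assume g: "g \<in> \<Phi>" and n: "card (separating p0 (srefl g m p0)) = n"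
      have "hyp g (of_int m) \<in> separating p0 (srefl g m p0)"
        using separating_srefl_self[OF g generic_p0] separating_self by blast
      then obtain b k where b: "b \<in> \<Phi>" "is_wall \<Phi> p0 b k"
        and K: "hyp b (of_int k) \<in> separating p0 (srefl g m p0)"
        using wall_separating_exists[OF generic_srefl[OF g generic_p0]] by blast
      have s: "simple_prod (srefl b k)"
        using b simple_prod_simple unfolding simple_refls_def by blast
      show "simple_prod (srefl g m)"
      proof (cases "hyp b (of_int k) = hyp g (of_int m)")
        case True
        thus ?thesis using s aff_refl_cong roots_nonzero g b(1) by metis
      next
        case False
        obtain g' m' where g': "g' \<in> \<Phi>" "\<And>v. srefl b k (srefl g m (srefl b k v)) = srefl g' m' v"
          using srefl_conj_root[OF b(1) g] by metis
        have "card (separating p0 (srefl g' m' p0)) < n"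
          using card_separating_conj_wall[OF g b K False] g'(2) n by simp
        hence "simple_prod (srefl g' m')" using less.IH g'(1) by blast
        moreover have "srefl g m = srefl b k \<circ> srefl g' m' \<circ> srefl b k"
          using g'(2) roots_nonzero[OF b(1)] by (auto simp flip: g'(2))
        ultimately show ?thesis using s simple_prod_comp by metis
      qed
    qed
  qed
  thus ?thesis using assms by blast
qed

lemma simple_prod_rprod:
  "\<forall>t\<in>{1..n}. \<exists>g\<in>\<Phi>. \<exists>m. R t = srefl g m \<Longrightarrow> simple_prod (rprod R n)"
proof (induction n)
  case 0
  show ?case unfolding simple_prod_def by (rule exI[of _ "[]"]) simp
next
  case (Suc n)
  then obtain g m where "g \<in> \<Phi>" "R (Suc n) = srefl g m" by force
  moreover have "simple_prod (rprod R n)" using Suc by force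
  ultimately have "simple_prod (R (Suc n) \<circ> rprod R n)"
    using srefl_simple_prod simple_prod_comp by metis
  thus ?case by (simp only: rprod.simps)
qed

lemma srefl_comp_ascent:
  assumes x: "simple_prod x" and s: "s \<in> SR" and g: "g \<in> \<Phi>"
    and asc: "L x < L (x \<circ> s)" and len: "L (srefl g m \<circ> x) = L x + 1"
    and ne: "srefl g m \<circ> x \<noteq> x \<circ> s"
  shows "L (srefl g m \<circ> x) < L (srefl g m \<circ> x \<circ> s)"
proof -
  have xs: "simple_prod (x \<circ> s)" using simple_prod_comp[OF x simple_prod_simple[OF s]] .
  have "hyp g (of_int m) \<notin> separating p0 ((x \<circ> s) p0)"
    using exchange_right[OF x s g] len ne by fastforce
  hence "hyp g (of_int m) \<in> separating p0 (srefl g m ((x \<circ> s) p0))"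
    using separating_srefl_self[OF g generic_simple_prod[OF xs]] by blast
  hence "L (srefl g m \<circ> (srefl g m \<circ> (x \<circ> s))) < L (srefl g m \<circ> (x \<circ> s))"
    using len_srefl_comp_less[OF simple_prod_comp[OF srefl_simple_prod[OF g] xs] g] by simp
  moreover have "srefl g m \<circ> (srefl g m \<circ> (x \<circ> s)) = x \<circ> s"
    using roots_nonzero[OF g] by auto
  ultimately have "L (x \<circ> s) < L (srefl g m \<circ> (x \<circ> s))" by simp
  thus ?thesis using asc len unfolding comp_assoc by linarith
qed

lemma ascent_along_reflections:
  assumes x: "simple_prod x" and s: "s \<in> SR" and asc: "L x < L (x \<circ> s)"
  shows "\<forall>t\<in>{1..n}. \<exists>g\<in>\<Phi>. \<exists>m. R t = srefl g m
    \<Longrightarrow> \<forall>t\<in>{1..n}. L (rprod R t \<circ> x) = L (rprod R (t - 1) \<circ> x) + 1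
                     \<and> rprod R t \<circ> x \<noteq> rprod R (t - 1) \<circ> x \<circ> s
    \<Longrightarrow> L (rprod R n \<circ> x) < L (rprod R n \<circ> x \<circ> s)"
proof (induction n)
  case 0
  show ?case using asc by (simp only: rprod.simps id_comp)
next
  case (Suc n)
  have IH: "L (rprod R n \<circ> x) < L (rprod R n \<circ> x \<circ> s)"
  proof (rule Suc.IH)
    have "{1..n} \<subseteq> {1..Suc n}" by auto
    thus "\<forall>t\<in>{1..n}. \<exists>g\<in>\<Phi>. \<exists>m. R t = srefl g m"
      "\<forall>t\<in>{1..n}. L (rprod R t \<circ> x) = L (rprod R (t - 1) \<circ> x) + 1
        \<and> rprod R t \<circ> x \<noteq> rprod R (t - 1) \<circ> x \<circ> s"
      using Suc.prems by blast+
  qed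
  have "Suc n \<in> {1..Suc n}" by simp
  then obtain g m where g: "g \<in> \<Phi>" and R: "R (Suc n) = srefl g m"
    using Suc.prems(1) by blast
  from bspec[OF Suc.prems(2) \<open>Suc n \<in> {1..Suc n}\<close>]
  have step: "L (rprod R (Suc n) \<circ> x) = L (rprod R n \<circ> x) + 1
      \<and> rprod R (Suc n) \<circ> x \<noteq> rprod R n \<circ> x \<circ> s"
    unfolding diff_Suc_1 .
  have eq: "rprod R (Suc n) \<circ> x = srefl g m \<circ> (rprod R n \<circ> x)"
    by (simp only: rprod.simps R comp_assoc)
  have "{1..n} \<subseteq> {1..Suc n}" by auto
  hence "simple_prod (rprod R n)" using Suc.prems(1) by (intro simple_prod_rprod) blast
  hence "simple_prod (rprod R n \<circ> x)" using x by (rule simple_prod_comp)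
  hence "L (srefl g m \<circ> (rprod R n \<circ> x)) < L (srefl g m \<circ> (rprod R n \<circ> x) \<circ> s)"
    using srefl_comp_ascent[OF _ s g IH] step unfolding eq by blast
  thus ?case unfolding eq .
qed

end

theorem corollary4p6:
  fixes \<Phi> :: "'a::euclidean_space set" and p0 :: 'a
    and w s :: "'a \<Rightarrow> 'a" and \<alpha> :: 'a and c :: int and n :: nat
    and r :: "nat \<Rightarrow> 'a \<Rightarrow> 'a"
  assumes "root_system \<Phi>"
    and "generic \<Phi> p0"
    and "w \<in> affW \<Phi>"
    and "s \<in> rdesc \<Phi> p0 w"
    and "\<alpha> \<in> \<Phi>"
    and "\<forall>t\<in>{1..n}. r t = aff_refl \<alpha> (of_int (c + int t))"
    and "\<forall>t\<in>{1..n}. len \<Phi> p0 (rprod r t \<circ> w \<circ> s) = len \<Phi> p0 (rprod r (t - 1) \<circ> w \<circ> s) + 1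
                   \<and> rprod r t \<circ> w \<circ> s \<noteq> rprod r (t - 1) \<circ> w"
  shows "s \<notin> rdesc \<Phi> p0 (rprod r n \<circ> w \<circ> s)"
proof -
  interpret alcove \<Phi> p0 using assms(1,2) by unfold_locales
  have s: "s \<in> SR" and desc: "L (w \<circ> s) < L w" using assms(4) unfolding rdesc_def by auto
  have ss: "w \<circ> s \<circ> s = w" using simple_refl_invol[OF s] by (simp add: comp_assoc)
  have ws: "simple_prod (w \<circ> s)"
  proof (rule ccontr)
    assume "\<not> simple_prod (w \<circ> s)"
    moreover from this have "\<not> simple_prod w"
      using simple_prod_comp[OF _ simple_prod_simple[OF s]] by blast
    ultimately show False using desc len_eq_if_not_simple_prod[of "w \<circ> s" w] by simp
  qed
  have "L (rprod r n \<circ> (w \<circ> s)) < L (rprod r n \<circ> (w \<circ> s) \<circ> s)"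
  proof (rule ascent_along_reflections[OF ws s])
    show "L (w \<circ> s) < L (w \<circ> s \<circ> s)" using desc ss by simp
    show "\<forall>t\<in>{1..n}. \<exists>g\<in>\<Phi>. \<exists>m. r t = srefl g m" using assms(5,6) by blast
    show "\<forall>t\<in>{1..n}. L (rprod r t \<circ> (w \<circ> s)) = L (rprod r (t - 1) \<circ> (w \<circ> s)) + 1
        \<and> rprod r t \<circ> (w \<circ> s) \<noteq> rprod r (t - 1) \<circ> (w \<circ> s) \<circ> s"
      using assms(7) ss by (simp add: comp_assoc)
  qed
  thus ?thesis unfolding rdesc_def by (simp add: comp_assoc)
qed

end
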